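(* If $\rho\equiv\sum_{n=1}^N \frac{r_n}{C_n}\le 1$, then for all $t\ge 0$, $$B(t)\le \min\left\{\Big(\sum_n r_n\Big)\sum_n\frac{\sigma_n}{C_n}+\sum_n\sigma_n,\;\; C_{max}\sum_n\frac{\sigma_n}{C_n}+\rho\, C_{max}\max_n\frac{L_n}{C_n}\right\}.$$
   Context: A multiclass FIFO system serves packets from $N$ classes. Class $n$ has constant service rate $C_n>0$; $C_{max}=\max_n C_n$. All packets, indexed in order of arrival (ties broken arbitrarily) as $p^{g,1},p^{g,2},\dots$ with arrival times $0\le a^{g,1}\le\cdots$ and lengths $l^{g,j}>0$, depart at $d^{g,j}=\max\{a^{g,j},d^{g,j-1}\}+l^{g,j}/C_{c(j)}$, $d^{g,0}=0$, $c(j)$ the class of $p^{g,j}$. $L_n$ is the maximum packet length of class $n$. $A_n(s,t)$ is the total length of class-$n$ packets arriving in $[s,t]$; each class satisfies $A_n(s,t)\le r_n(t-s)+\sigma_n$ for all $0\le s\le t$, with $r_n,\sigma_n\ge0$. $A(t)$ is the total length of all packets arrived in $[0,t]$, $A^*(t)$ the total length of packets with departure time $\le t$, and the backlog is $B(t)=A(t)-A^*(t)$. *)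

theory Defs
  imports Complex_Main "HOL-Library.Extended_Nat"
begin

text \<open>Packets are indexed 1, 2, ... in order of arrival; the number of packets is
  M :: enat (possibly infinite). Packet j has arrival time a j, length l j and class c j.\<close>

definition packets :: "enat \<Rightarrow> nat set" where
  "packets M = {j. 1 \<le> j \<and> enat j \<le> M}"

fun dep :: "(nat \<Rightarrow> real) \<Rightarrow> (nat \<Rightarrow> real) \<Rightarrow> (nat \<Rightarrow> nat) \<Rightarrow> (nat \<Rightarrow> real) \<Rightarrow> nat \<Rightarrow> real" where
  "dep a l c C 0 = 0"
| "dep a l c C (Suc j) = max (a (Suc j)) (dep a l c C j) + l (Suc j) / C (c (Suc j))"

definition arr_class :: "enat \<Rightarrow> (nat \<Rightarrow> real) \<Rightarrow> (nat \<Rightarrow> real) \<Rightarrow> (nat \<Rightarrow> nat) \<Rightarrow> nat \<Rightarrow> real \<Rightarrow> real \<Rightarrow> real" where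
  "arr_class M a l c n s t = (\<Sum>j\<in>{j\<in>packets M. c j = n \<and> s \<le> a j \<and> a j \<le> t}. l j)"

definition arr :: "enat \<Rightarrow> (nat \<Rightarrow> real) \<Rightarrow> (nat \<Rightarrow> real) \<Rightarrow> real \<Rightarrow> real" where
  "arr M a l t = (\<Sum>j\<in>{j\<in>packets M. a j \<le> t}. l j)"

definition departed :: "enat \<Rightarrow> (nat \<Rightarrow> real) \<Rightarrow> (nat \<Rightarrow> real) \<Rightarrow> (nat \<Rightarrow> nat) \<Rightarrow> (nat \<Rightarrow> real) \<Rightarrow> real \<Rightarrow> real" where
  "departed M a l c C t = (\<Sum>j\<in>{j\<in>packets M. dep a l c C j \<le> t}. l j)"

definition backlog :: "enat \<Rightarrow> (nat \<Rightarrow> real) \<Rightarrow> (nat \<Rightarrow> real) \<Rightarrow> (nat \<Rightarrow> nat) \<Rightarrow> (nat \<Rightarrow> real) \<Rightarrow> real \<Rightarrow> real" where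
  "backlog M a l c C t = arr M a l t - departed M a l c C t"

end

theory Submission
  imports Defs
begin

(* Let k be the first packet still in the system at time t and i the start of the busy
   period containing k, i.e. the last packet up to k that found the server idle.  Within
   the busy period the server never idles, so D k = a i + (sum of service times of i..k),
   and packet k-1 (if i < k) has already left by time t.  All unfinished packets arrive in
   [a k, t], and all of i..k arrive in [a i, a k].  Splitting any set of packets arriving
   in a window [u0,u1] by class and applying the arrival curves gives
     (total length) <= (sum r_n)(u1-u0) + sum sigma_n,
     (total service time) <= rho (u1-u0) + sum sigma_n / C_n.
   Bound 1: applied to i..k, the second estimate with rho <= 1 shows t - a k <= sum sigma_n/C_n;
   the first estimate on the unfinished packets then gives the first term of the minimum.
   Bound 2: applied to (i..k-1) together with the unfinished packets on [a i, t], the second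
   estimate bounds their service time by rho * (service time of k) + sum sigma_n/C_n; each
   packet length is at most C_max times its service time, giving the second term. *)

lemma packets_downward_closed:
  assumes "j \<in> packets M" "1 \<le> i" "i \<le> j"
  shows "i \<in> packets M"
  using assms by (simp add: packets_def) (meson enat_ord_simps(1) order_trans)

text \<open>Arithmetic core of the second bound: if the busy-period work V before packet k has been
  done by time x after the busy period started, but k with service time w has not, then a load
  \<rho> \<le> 1 yields \<rho> x - V \<le> \<rho> w.\<close>
lemma load_slack:
  fixes \<rho> V x w :: real
  assumes "0 \<le> \<rho>" "\<rho> \<le> 1" "0 \<le> V" "V \<le> x" "x < V + w"
  shows "\<rho> * x - V \<le> \<rho> * w"
proof (cases "w \<le> x")
  case True
  have "(1 - \<rho>) * w \<le> (1 - \<rho>) * x" using True assms by (intro mult_left_mono) auto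
  then show ?thesis using assms by (simp add: algebra_simps)
next
  case False
  then have "\<rho> * x \<le> \<rho> * w" using assms by (intro mult_left_mono) auto
  then show ?thesis using assms by simp
qed

locale fifo_server =
  fixes M :: enat and a l :: "nat \<Rightarrow> real" and c :: "nat \<Rightarrow> nat" and C :: "nat \<Rightarrow> real"
  assumes arr_nonneg: "j \<in> packets M \<Longrightarrow> 0 \<le> a j"
    and arr_mono: "i \<in> packets M \<Longrightarrow> j \<in> packets M \<Longrightarrow> i \<le> j \<Longrightarrow> a i \<le> a j"
    and len_pos: "j \<in> packets M \<Longrightarrow> 0 < l j"
    and rate_pos: "j \<in> packets M \<Longrightarrow> 0 < C (c j)"
    and finite_arrivals: "finite {j \<in> packets M. a j \<le> s}"
begin

abbreviation D :: "nat \<Rightarrow> real" where "D \<equiv> dep a l c C"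

abbreviation service :: "nat \<Rightarrow> real" where "service j \<equiv> l j / C (c j)"

lemma service_pos: "j \<in> packets M \<Longrightarrow> 0 < service j"
  using len_pos rate_pos by simp

lemma dep_ge_arr:
  assumes "j \<in> packets M"
  shows "a j \<le> D j"
proof -
  obtain m where "j = Suc m" using assms by (cases j) (auto simp: packets_def)
  then show ?thesis using service_pos[OF assms] by simp
qed

text \<open>Every packet k lies in a busy period starting at some packet i \<le> k that found the
  server idle; from then on the server works without interruption.\<close>
lemma busy_period_start:
  assumes k: "k \<in> packets M"
  obtains i where "1 \<le> i" "i \<le> k"
    "\<And>m. i \<le> m \<Longrightarrow> m \<le> k \<Longrightarrow> D m = a i + (\<Sum>j=i..m. service j)"
proof -
  define idle where "idle = {m \<in> {1..k}. D (m - 1) \<le> a m}"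
  have k1: "1 \<le> k" using k by (simp add: packets_def)
  have "1 \<in> idle"
    using k1 arr_nonneg[OF packets_downward_closed[OF k, of 1]] by (simp add: idle_def)
  define i where "i = Max idle"
  have "finite idle" by (simp add: idle_def)
  then have "i \<in> idle" and i_last: "\<And>m. m \<in> idle \<Longrightarrow> m \<le> i"
    using \<open>1 \<in> idle\<close> Max_in by (auto simp: i_def)
  then have i: "1 \<le> i" "i \<le> k" "D (i - 1) \<le> a i" by (auto simp: idle_def)
  have "D m = a i + (\<Sum>j=i..m. service j)" if "i \<le> m" "m \<le> k" for m
    using that
  proof (induction m rule: dec_induct)
    case base
    obtain p where "i = Suc p" using i(1) by (cases i) auto
    then show ?case using i(3) by simp
  next
    case (step n)
    have "Suc n \<notin> idle" using i_last step by fastforce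
    then have "a (Suc n) < D n" using step i by (auto simp: idle_def)
    then show ?case using step by simp
  qed
  with i(1,2) show ?thesis using that by blast
qed

definition unfinished :: "real \<Rightarrow> nat set" where
  "unfinished t = {j \<in> packets M. a j \<le> t \<and> t < D j}"

lemma finite_unfinished: "finite (unfinished t)"
  by (rule finite_subset[OF _ finite_arrivals[of t]]) (auto simp: unfinished_def)

lemma backlog_eq_unfinished: "backlog M a l c C t = (\<Sum>j\<in>unfinished t. l j)"
proof -
  let ?arrived = "{j \<in> packets M. a j \<le> t}" and ?departed = "{j \<in> packets M. D j \<le> t}"
  have "?departed \<subseteq> ?arrived" using dep_ge_arr by force
  then have "(\<Sum>j\<in>?arrived - ?departed. l j) = (\<Sum>j\<in>?arrived. l j) - (\<Sum>j\<in>?departed. l j)"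
    by (rule sum_diff[OF finite_arrivals])
  moreover have "?arrived - ?departed = unfinished t" by (auto simp: unfinished_def)
  ultimately show ?thesis unfolding backlog_def arr_def departed_def by simp
qed

lemma first_unfinished:
  assumes "unfinished t \<noteq> {}"
  obtains i k where "1 \<le> i" "i \<le> k" "k \<in> unfinished t"
    "\<And>j. j \<in> unfinished t \<Longrightarrow> k \<le> j"
    "a i + (\<Sum>j=i..<k. service j) \<le> t" "t < a i + (\<Sum>j=i..k. service j)"
proof -
  define k where "k = Min (unfinished t)"
  have kU: "k \<in> unfinished t" and k_first: "\<And>j. j \<in> unfinished t \<Longrightarrow> k \<le> j"
    using finite_unfinished assms by (auto simp: k_def)
  then have k: "k \<in> packets M" "a k \<le> t" "t < D k" by (auto simp: unfinished_def)
  obtain i where i: "1 \<le> i" "i \<le> k"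
    and busy: "\<And>m. i \<le> m \<Longrightarrow> m \<le> k \<Longrightarrow> D m = a i + (\<Sum>j=i..m. service j)"
    using busy_period_start[OF k(1)] by blast
  have "a i + (\<Sum>j=i..<k. service j) \<le> t"
  proof (cases "i = k")
    case True
    then show ?thesis using k by simp
  next
    case False
    then have ik: "i \<le> k - 1" "k - 1 < k" using i by auto
    have prev: "k - 1 \<in> packets M" using packets_downward_closed[OF k(1)] ik i by auto
    have "k - 1 \<notin> unfinished t" using k_first ik by fastforce
    moreover have "a (k - 1) \<le> t" using arr_mono[OF prev k(1)] k by simp
    ultimately have "D (k - 1) \<le> t" using prev by (auto simp: unfinished_def)
    moreover have "{i..k - 1} = {i..<k}" using ik by auto
    ultimately show ?thesis using busy[OF ik(1)] by simp
  qed
  moreover have "t < a i + (\<Sum>j=i..k. service j)" using busy[OF i(2) order_refl] k(3) by simp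
  ultimately show ?thesis using that i kU k_first by blast
qed

end

locale fifo_arrival_curves = fifo_server +
  fixes N :: nat and r \<sigma> L :: "nat \<Rightarrow> real"
  assumes N_pos: "1 \<le> N"
    and C_pos: "n \<in> {1..N} \<Longrightarrow> 0 < C n"
    and class_range: "j \<in> packets M \<Longrightarrow> c j \<in> {1..N}"
    and L_max: "j \<in> packets M \<Longrightarrow> l j \<le> L (c j)"
    and L_nonneg: "n \<in> {1..N} \<Longrightarrow> 0 \<le> L n"
    and r_nonneg: "n \<in> {1..N} \<Longrightarrow> 0 \<le> r n"
    and sigma_nonneg: "n \<in> {1..N} \<Longrightarrow> 0 \<le> \<sigma> n"
    and arrival_curve: "n \<in> {1..N} \<Longrightarrow> 0 \<le> s \<Longrightarrow> s \<le> u \<Longrightarrow>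
                          arr_class M a l c n s u \<le> r n * (u - s) + \<sigma> n"
begin

abbreviation \<rho> :: real where "\<rho> \<equiv> \<Sum>n=1..N. r n / C n"
abbreviation total_rate :: real where "total_rate \<equiv> \<Sum>n=1..N. r n"
abbreviation total_burst :: real where "total_burst \<equiv> \<Sum>n=1..N. \<sigma> n"
abbreviation burst_time :: real where "burst_time \<equiv> \<Sum>n=1..N. \<sigma> n / C n"
abbreviation C_max :: real where "C_max \<equiv> Max (C ` {1..N})"
abbreviation max_service_time :: real where "max_service_time \<equiv> Max ((\<lambda>n. L n / C n) ` {1..N})"

lemma rho_nonneg: "0 \<le> \<rho>"
  using r_nonneg C_pos by (intro sum_nonneg) (auto intro: divide_nonneg_pos)

lemma burst_time_nonneg: "0 \<le> burst_time"
  using sigma_nonneg C_pos by (intro sum_nonneg) (auto intro: divide_nonneg_pos)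

lemma total_rate_nonneg: "0 \<le> total_rate"
  using r_nonneg by (intro sum_nonneg) auto

lemma total_burst_nonneg: "0 \<le> total_burst"
  using sigma_nonneg by (intro sum_nonneg) auto

lemma C_max_pos: "0 < C_max"
  using N_pos C_pos[of 1] by (subst Max_gr_iff) auto

lemma max_service_time_nonneg: "0 \<le> max_service_time"
  using N_pos L_nonneg[of 1] C_pos[of 1]
  by (subst Max_ge_iff) (auto intro!: bexI[of _ 1] divide_nonneg_pos)

lemma service_le_max:
  assumes "j \<in> packets M"
  shows "service j \<le> max_service_time"
proof -
  have "service j \<le> L (c j) / C (c j)"
    using L_max[OF assms] rate_pos[OF assms] by (simp add: divide_right_mono)
  also have "\<dots> \<le> max_service_time" using class_range[OF assms] by simp
  finally show ?thesis .
qed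

lemma len_le_C_max_service:
  assumes "j \<in> packets M"
  shows "l j \<le> C_max * service j"
proof -
  have "C (c j) \<le> C_max" using class_range[OF assms] by simp
  then have "C (c j) * service j \<le> C_max * service j"
    using service_pos[OF assms] by (intro mult_right_mono) auto
  then show ?thesis using rate_pos[OF assms] by simp
qed

lemma weighted_arrivals:
  assumes S: "S \<subseteq> packets M" "\<And>j. j \<in> S \<Longrightarrow> u0 \<le> a j \<and> a j \<le> u1"
    and u: "0 \<le> u0" "u0 \<le> u1" and g: "\<And>n. n \<in> {1..N} \<Longrightarrow> 0 \<le> g n"
  shows "(\<Sum>j\<in>S. g (c j) * l j) \<le> (\<Sum>n=1..N. g n * (r n * (u1 - u0) + \<sigma> n))"
proof -
  have fin: "finite S" by (rule finite_subset[OF _ finite_arrivals[of u1]]) (use S in auto)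
  have per_class: "(\<Sum>j\<in>{j\<in>S. c j = n}. l j) \<le> r n * (u1 - u0) + \<sigma> n"
    if n: "n \<in> {1..N}" for n
  proof -
    have "(\<Sum>j\<in>{j\<in>S. c j = n}. l j) \<le> arr_class M a l c n u0 u1"
      unfolding arr_class_def
    proof (rule sum_mono2)
      show "finite {j \<in> packets M. c j = n \<and> u0 \<le> a j \<and> a j \<le> u1}"
        by (rule finite_subset[OF _ finite_arrivals[of u1]]) auto
    qed (use S len_pos in \<open>auto intro: less_imp_le\<close>)
    also have "\<dots> \<le> r n * (u1 - u0) + \<sigma> n" using arrival_curve n u by blast
    finally show ?thesis .
  qed
  have "(\<Sum>j\<in>S. g (c j) * l j) = (\<Sum>n=1..N. \<Sum>j\<in>{j\<in>S. c j = n}. g (c j) * l j)"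
  proof -
    have "c ` S \<subseteq> {1..N}" using S class_range by auto
    then show ?thesis by (rule sum.group[OF fin finite_atLeastAtMost, symmetric])
  qed
  also have "\<dots> = (\<Sum>n=1..N. g n * (\<Sum>j\<in>{j\<in>S. c j = n}. l j))"
    by (simp add: sum_distrib_left)
  also have "\<dots> \<le> (\<Sum>n=1..N. g n * (r n * (u1 - u0) + \<sigma> n))"
    by (rule sum_mono) (simp add: g per_class mult_left_mono)
  finally show ?thesis .
qed

lemma arrivals_in_window:
  assumes "S \<subseteq> packets M" "\<And>j. j \<in> S \<Longrightarrow> u0 \<le> a j \<and> a j \<le> u1" "0 \<le> u0" "u0 \<le> u1"
  shows "(\<Sum>j\<in>S. l j) \<le> total_rate * (u1 - u0) + total_burst"
  using weighted_arrivals[OF assms, of "\<lambda>_. 1"] by (simp add: sum.distrib sum_distrib_right)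

lemma work_in_window:
  assumes "S \<subseteq> packets M" "\<And>j. j \<in> S \<Longrightarrow> u0 \<le> a j \<and> a j \<le> u1" "0 \<le> u0" "u0 \<le> u1"
  shows "(\<Sum>j\<in>S. service j) \<le> \<rho> * (u1 - u0) + burst_time"
proof -
  have "\<And>n. n \<in> {1..N} \<Longrightarrow> 0 \<le> 1 / C n" using C_pos by (simp add: less_imp_le)
  from weighted_arrivals[OF assms this]
  have "(\<Sum>j\<in>S. service j) \<le> (\<Sum>n=1..N. (r n * (u1 - u0) + \<sigma> n) / C n)" by simp
  also have "\<dots> = \<rho> * (u1 - u0) + burst_time"
    by (simp add: sum.distrib sum_distrib_right add_divide_distrib)
  finally show ?thesis .
qed

lemma backlog_bound_rate:
  assumes load: "\<rho> \<le> 1"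
  shows "(\<Sum>j\<in>unfinished t. l j) \<le> total_rate * burst_time + total_burst"
proof (cases "unfinished t = {}")
  case True
  then show ?thesis
    using burst_time_nonneg total_rate_nonneg total_burst_nonneg by simp
next
  case False
  obtain i k where i: "1 \<le> i" "i \<le> k" and kU: "k \<in> unfinished t"
    and k_first: "\<And>j. j \<in> unfinished t \<Longrightarrow> k \<le> j"
    and k_late: "t < a i + (\<Sum>j=i..k. service j)"
    by (rule first_unfinished[OF False]) simp
  have k: "k \<in> packets M" "a k \<le> t" using kU by (auto simp: unfinished_def)
  have busy_packets: "{i..k} \<subseteq> packets M" using packets_downward_closed[OF k(1)] i by auto
  have "i \<in> packets M" using busy_packets i by auto
  then have arr_busy: "a i \<le> a j \<and> a j \<le> a k" if "j \<in> {i..k}" for j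
    using that busy_packets arr_mono k(1) by auto
  have "(\<Sum>j=i..k. service j) \<le> \<rho> * (a k - a i) + burst_time"
    using work_in_window[OF busy_packets arr_busy] arr_busy[of i] arr_nonneg[OF \<open>i \<in> packets M\<close>] i
    by simp
  moreover have "\<rho> * (a k - a i) \<le> a k - a i"
    using load rho_nonneg arr_busy[of i] i by (simp add: mult_left_le_one_le)
  ultimately have wait: "t - a k \<le> burst_time" using k_late by linarith
  have "(\<Sum>j\<in>unfinished t. l j) \<le> total_rate * (t - a k) + total_burst"
  proof (rule arrivals_in_window)
    show "unfinished t \<subseteq> packets M" by (auto simp: unfinished_def)
    show "a k \<le> a j \<and> a j \<le> t" if "j \<in> unfinished t" for j
      using that k_first arr_mono k(1) by (auto simp: unfinished_def)
  qed (use k arr_nonneg in auto)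
  also have "\<dots> \<le> total_rate * burst_time + total_burst"
    using wait total_rate_nonneg by (simp add: mult_left_mono)
  finally show ?thesis .
qed

lemma unfinished_work:
  assumes load: "\<rho> \<le> 1" and i: "1 \<le> i" "i \<le> k" and kU: "k \<in> unfinished t"
    and k_first: "\<And>j. j \<in> unfinished t \<Longrightarrow> k \<le> j"
    and done_before: "a i + (\<Sum>j=i..<k. service j) \<le> t"
    and k_late: "t < a i + (\<Sum>j=i..k. service j)"
  shows "(\<Sum>j\<in>unfinished t. service j) \<le> \<rho> * service k + burst_time"
proof -
  define V where "V = (\<Sum>j=i..<k. service j)"
  have k: "k \<in> packets M" using kU by (simp add: unfinished_def)
  have before: "{i..<k} \<subseteq> packets M" using packets_downward_closed[OF k] i by auto
  have "0 \<le> service j" if "j \<in> {i..<k}" for j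
    using service_pos[of j] that before by fastforce
  then have V_nonneg: "0 \<le> V" unfolding V_def by (rule sum_nonneg)
  have "i \<in> packets M" using packets_downward_closed[OF k] i by auto
  let ?S = "{i..<k} \<union> unfinished t"
  have "(\<Sum>j\<in>?S. service j) \<le> \<rho> * (t - a i) + burst_time"
  proof (rule work_in_window)
    show "?S \<subseteq> packets M" using before by (auto simp: unfinished_def)
    show "a i \<le> a j \<and> a j \<le> t" if "j \<in> ?S" for j
    proof (cases "j < k")
      case True
      then have "j \<in> {i..<k}" using that k_first by force
      then have "j \<in> packets M" "i \<le> j" using before by auto
      then show ?thesis
        using True arr_mono[OF \<open>i \<in> packets M\<close>] arr_mono[of j k] k kU by (auto simp: unfinished_def)
    next
      case False
      then have "j \<in> unfinished t" using that by auto
      then have "k \<le> j" "j \<in> packets M" "a j \<le> t" using k_first by (auto simp: unfinished_def)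
      then show ?thesis using i arr_mono[OF \<open>i \<in> packets M\<close>, of j] by simp
    qed
  qed (use \<open>i \<in> packets M\<close> arr_nonneg done_before V_nonneg V_def in auto)
  moreover have "(\<Sum>j\<in>?S. service j) = V + (\<Sum>j\<in>unfinished t. service j)"
    unfolding V_def by (intro sum.union_disjoint) (auto simp: finite_unfinished dest: k_first)
  moreover have "\<rho> * (t - a i) - V \<le> \<rho> * service k"
  proof (rule load_slack[OF rho_nonneg load V_nonneg])
    show "V \<le> t - a i" using done_before V_def by simp
    have "(\<Sum>j=i..k. service j) = V + service k"
      using i by (simp add: V_def sum.atLeastLessThan_Suc atLeastLessThanSuc_atLeastAtMost[symmetric])
    then show "t - a i < V + service k" using k_late by simp
  qed
  ultimately show ?thesis by linarith
qed

lemma backlog_bound_service: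
  assumes load: "\<rho> \<le> 1"
  shows "(\<Sum>j\<in>unfinished t. l j) \<le> C_max * burst_time + \<rho> * C_max * max_service_time"
proof (cases "unfinished t = {}")
  case True
  then show ?thesis using C_max_pos burst_time_nonneg rho_nonneg max_service_time_nonneg by simp
next
  case False
  then obtain i k where "1 \<le> i" "i \<le> k" and kU: "k \<in> unfinished t"
    and "\<And>j. j \<in> unfinished t \<Longrightarrow> k \<le> j"
    and "a i + (\<Sum>j=i..<k. service j) \<le> t" "t < a i + (\<Sum>j=i..k. service j)"
    by (rule first_unfinished) simp
  then have work: "(\<Sum>j\<in>unfinished t. service j) \<le> \<rho> * service k + burst_time"
    by (rule unfinished_work[OF load])
  have k: "k \<in> packets M" using kU by (simp add: unfinished_def)
  have "(\<Sum>j\<in>unfinished t. l j) \<le> (\<Sum>j\<in>unfinished t. C_max * service j)"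
    by (intro sum_mono len_le_C_max_service) (simp add: unfinished_def)
  also have "\<dots> = C_max * (\<Sum>j\<in>unfinished t. service j)" by (rule sum_distrib_left[symmetric])
  also have "\<dots> \<le> C_max * (\<rho> * service k + burst_time)"
    using work C_max_pos by (intro mult_left_mono) auto
  also have "\<dots> \<le> C_max * (\<rho> * max_service_time + burst_time)"
    using service_le_max[OF k] rho_nonneg C_max_pos
    by (intro mult_left_mono add_right_mono) simp_all
  finally show ?thesis by (simp add: algebra_simps)
qed

end

theorem theorem2:
  fixes N :: nat and M :: enat
    and a l :: "nat \<Rightarrow> real" and c :: "nat \<Rightarrow> nat"
    and C r \<sigma> L :: "nat \<Rightarrow> real" and t :: real
  assumes N_pos: "N \<ge> 1"
    and C_pos: "\<forall>n\<in>{1..N}. C n > 0"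
    and class_range: "\<forall>j\<in>packets M. c j \<in> {1..N}"
    and arr_nonneg: "\<forall>j\<in>packets M. 0 \<le> a j"
    and arr_mono: "\<forall>i\<in>packets M. \<forall>j\<in>packets M. i \<le> j \<longrightarrow> a i \<le> a j"
    and len_pos: "\<forall>j\<in>packets M. l j > 0"
    and L_max: "\<forall>j\<in>packets M. l j \<le> L (c j)"
    and L_attained: "\<forall>n\<in>{1..N}. (\<exists>j\<in>packets M. c j = n) \<longrightarrow> (\<exists>j\<in>packets M. c j = n \<and> l j = L n)"
    and L_nonneg: "\<forall>n\<in>{1..N}. L n \<ge> 0"
    and finite_arrivals: "\<forall>s. finite {j\<in>packets M. a j \<le> s}"
    and r_nonneg: "\<forall>n\<in>{1..N}. r n \<ge> 0"
    and sigma_nonneg: "\<forall>n\<in>{1..N}. \<sigma> n \<ge> 0"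
    and arrival_curve: "\<forall>n\<in>{1..N}. \<forall>s u. 0 \<le> s \<and> s \<le> u \<longrightarrow>
                          arr_class M a l c n s u \<le> r n * (u - s) + \<sigma> n"
    and load: "(\<Sum>n=1..N. r n / C n) \<le> 1"
    and t_nonneg: "t \<ge> 0"
  shows "backlog M a l c C t \<le>
           min ((\<Sum>n=1..N. r n) * (\<Sum>n=1..N. \<sigma> n / C n) + (\<Sum>n=1..N. \<sigma> n))
               (Max (C ` {1..N}) * (\<Sum>n=1..N. \<sigma> n / C n)
                + (\<Sum>n=1..N. r n / C n) * Max (C ` {1..N}) * Max ((\<lambda>n. L n / C n) ` {1..N}))"
proof -
  interpret fifo_arrival_curves M a l c C N r \<sigma> L
    by unfold_locales (use N_pos C_pos class_range arr_nonneg arr_mono len_pos L_max L_nonneg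
        finite_arrivals r_nonneg sigma_nonneg arrival_curve in auto)
  show ?thesis
    unfolding backlog_eq_unfinished
    using backlog_bound_rate[OF load] backlog_bound_service[OF load] by simp
qed

end
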